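(* Let $\lambda>0$, $\xi>0$, and real velocities $v_2<v_1$ with either $v_2<0<v_1$ or $0<v_2<v_1$. Let $\{(\tilde X(t),V(t)),\,t\ge0\}$ be the extended telegraph process driven by geometric counting processes with parameter $\lambda$ and subject to Poissonian resets to the origin with rate $\xi$ (as described in the context), started at $\tilde X(0)=0$, $V(0)=v_j$. Then for all $t>0$ and $v_2t<x<v_1t$, for $j=1,2$, the (generalized) sub-densities satisfy $$ \begin{aligned} \tilde p_j(x,t\,|\,v_j)&=\frac{e^{-\xi t}\,\delta(x-v_jt)}{1+\lambda t}+\mathbb{1}_{\{v_2t<x<v_1t\}}\frac{e^{-\xi t}\lambda^2\tau^{2-j}(t-\tau)^{j-1}}{(v_1-v_2)(1+\lambda t)^2} +\mathrm{sgn}(v_j)\,\mathbb{1}_{\{0<\frac{x}{v_j}<t\}}\frac{\xi e^{-\xi x/v_j}}{v_j+\lambda x}\\ &\quad+\boldsymbol I(x,t)\Bigg[(-1)^{3-j}\frac{\xi(v_{3-j}+\lambda x)}{(v_1-v_2)^2}\,\Theta_\lambda^\xi(x,t)+(-1)^j\frac{\xi e^{\xi/\lambda}}{(v_1-v_2)^2}\Big(\frac{v_{3-j}(\lambda+\xi)}{\lambda}+x\xi\Big)\Gamma_\lambda^\xi(x,t)\Bigg], \end{aligned} $$ $$ \begin{aligned} \tilde p_{3-j}(x,t\,|\,v_j)&=\mathbb{1}_{\{v_2t<x<v_1t\}}\frac{e^{-\xi t}\lambda\big[1+\lambda\tau^{j-1}(t-\tau)^{2-j}\big]}{(v_1-v_2)(1+\lambda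 t)^2} +\boldsymbol I(x,t)\Bigg[(-1)^j\frac{\xi(v_{3-j}+\lambda x)}{(v_1-v_2)^2}\,\Theta_\lambda^\xi(x,t)\\ &\quad+(-1)^{3-j}\frac{\xi e^{\xi/\lambda}}{(v_1-v_2)^2}\Big(\frac{v_j(\lambda+\xi)}{\lambda}+x\xi+(-1)^j\frac{\xi(v_1-v_2)}{\lambda}\Big)\Gamma_\lambda^\xi(x,t)\Bigg]. \end{aligned} $$
   Context: Geometric counting process (GCP) with intensity $\lambda>0$: a counting process $\tilde N_\lambda$ with $\tilde N_\lambda(0)=0$ obtained as a Poisson process whose rate is random and exponentially distributed with mean $\lambda$; its increments satisfy $P\{\tilde N_\lambda(t+s)-\tilde N_\lambda(t)=k\}=\frac{1}{1+\lambda s}\big(\frac{\lambda s}{1+\lambda s}\big)^k$, $k\ge0$, and each inter-event time has marginal density $\lambda/(1+\lambda t)^2$, $t\ge0$. The process without resets $(X(t),V(t))$: a particle starts at $X(0)=0$ with velocity $V(0)=v_j\in\{v_1,v_2\}$ ($v_1,v_2\neq 0$, $v_2<v_1$) and moves on $\mathbb R$ with velocity alternating between $v_1$ and $v_2$, $X(t)=\int_0^tV(s)\,ds$; the numbers of periods spent with velocity $v_1$ and with velocity $v_2$ are governed by two independent GCPs each of intensity $\lambda$. Its generalized sub-densities $p_i(x,t\,|\,v_j)=P[X(t)\in dx,V(t)=v_i\,|\,X(0)=0,V(0)=v_j]/dx$ are, for $t>0$, $p_i(x,t|v_j)=\mathbb 1_{\{i=j\}}\frac{\delta(x-v_jt)}{1+\lambda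 t}+\mathbb 1_{\{v_2t<x<v_1t\}}\frac{\lambda c_{i,j}}{(v_1-v_2)(1+\lambda t)^2}$ with $c_{1,1}=\lambda\tau$, $c_{1,2}=1+\lambda\tau$, $c_{2,1}=1+\lambda(t-\tau)$, $c_{2,2}=\lambda(t-\tau)$, where $\tau=\tau(x,t)=\frac{x-v_2t}{v_1-v_2}$. The reset process $(\tilde X(t),V(t))$: same dynamics, but the particle is instantaneously reset to the origin at the epochs of an independent Poisson process of rate $\xi>0$, after which it restarts afresh with the initial velocity $v_j$. Its generalized sub-densities $\tilde p_i(x,t|v_j)\,dx=P[\tilde X(t)\in dx,V(t)=v_i\,|\,\tilde X(0)=0,V(0)=v_j]$ satisfy $\tilde p_i(x,t|v_j)=e^{-\xi t}p_i(x,t|v_j)+\xi\int_0^te^{-\xi s}p_i(x,s|v_j)\,ds$. Discrete components are written with the Dirac delta $\delta$. Notation: $M_x=\max\{x/v_1,x/v_2\}$, $m_{x,t}=\min\{x/v_2,t\}$; $\Gamma(a,z_0,z_1)=\int_{z_0}^{z_1}s^{a-1}e^{-s}ds$ (generalized incomplete gamma function); $\Gamma_\lambda^\xi(x,t)=\Gamma[0,(M_x+\frac1\lambda)\xi,(t+\frac1\lambda)\xi]$ if $v_2<0<v_1$ and $\Gamma[0,(\frac{x}{v_1}+\frac1\lambda)\xi,(m_{x,t}+\frac1\lambda)\xi]$ if $0<v_2<v_1$; $\boldsymbol I(x,t)=\mathbb 1_{\{\min\{v_2t,0\}<x<v_1t\}}$; $\Theta_\lambda^\xi(x,t)=\frac{e^{-\xi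 M_x}}{1+\lambda M_x}-\frac{e^{-\xi t}}{1+\lambda t}$ if $v_2<0<v_1$, and $\frac{e^{-\xi x/v_1}}{1+\lambda x/v_1}-\frac{e^{-\xi m_{x,t}}}{1+\lambda m_{x,t}}$ if $0<v_2<v_1$; $\mathrm{sgn}$ is the sign function; $\mathbb 1_A$ is the indicator of $A$. *)

theory Defs
  imports "HOL-Analysis.Analysis"
begin

definition vel :: "real \<Rightarrow> real \<Rightarrow> nat \<Rightarrow> real" where
  "vel v1 v2 i = (if i = 1 then v1 else v2)"

definition tau :: "real \<Rightarrow> real \<Rightarrow> real \<Rightarrow> real \<Rightarrow> real" where
  "tau v1 v2 x t = (x - v2 * t) / (v1 - v2)"

text \<open>Coefficients c_{i,j} of the absolutely continuous part of p_i(x,t|v_j).\<close>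
definition coef :: "real \<Rightarrow> real \<Rightarrow> real \<Rightarrow> nat \<Rightarrow> nat \<Rightarrow> real \<Rightarrow> real \<Rightarrow> real" where
  "coef lam v1 v2 i j x t =
     (let \<tau> = tau v1 v2 x t in
      if i = 1 \<and> j = 1 then lam * \<tau>
      else if i = 1 \<and> j = 2 then 1 + lam * \<tau>
      else if i = 2 \<and> j = 1 then 1 + lam * (t - \<tau>)
      else lam * (t - \<tau>))"

text \<open>Generalized sub-density p_i(.,s|v_j) of the process without resets, as a
  set function on Borel sets: the Dirac component integrates to an indicator.\<close>
definition subP :: "real \<Rightarrow> real \<Rightarrow> real \<Rightarrow> nat \<Rightarrow> nat \<Rightarrow> real \<Rightarrow> real set \<Rightarrow> real" where
  "subP lam v1 v2 i j s A =
     (if i = j then indicator A (vel v1 v2 j * s) / (1 + lam * s) else 0)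
     + (\<integral>x\<in>A \<inter> {v2 * s<..<v1 * s}.
          lam * coef lam v1 v2 i j x s / ((v1 - v2) * (1 + lam * s)^2) \<partial>lborel)"

text \<open>Generalized sub-density of the reset process (renewal formula).\<close>
definition subP_reset :: "real \<Rightarrow> real \<Rightarrow> real \<Rightarrow> real \<Rightarrow> nat \<Rightarrow> nat \<Rightarrow> real \<Rightarrow> real set \<Rightarrow> real" where
  "subP_reset lam xi v1 v2 i j t A =
     exp (- xi * t) * subP lam v1 v2 i j t A
     + xi * (LBINT s=0..t. exp (- xi * s) * subP lam v1 v2 i j s A)"

definition GammaInc :: "real \<Rightarrow> real \<Rightarrow> real \<Rightarrow> real" where
  "GammaInc a z0 z1 = (LBINT s=z0..z1. s powr (a - 1) * exp (- s))"

definition Mx :: "real \<Rightarrow> real \<Rightarrow> real \<Rightarrow> real" where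
  "Mx v1 v2 x = max (x / v1) (x / v2)"

definition mxt :: "real \<Rightarrow> real \<Rightarrow> real \<Rightarrow> real" where
  "mxt v2 x t = min (x / v2) t"

definition GammaLX :: "real \<Rightarrow> real \<Rightarrow> real \<Rightarrow> real \<Rightarrow> real \<Rightarrow> real \<Rightarrow> real" where
  "GammaLX lam xi v1 v2 x t =
     (if v2 < 0 then GammaInc 0 ((Mx v1 v2 x + 1 / lam) * xi) ((t + 1 / lam) * xi)
      else GammaInc 0 ((x / v1 + 1 / lam) * xi) ((mxt v2 x t + 1 / lam) * xi))"

definition ThetaLX :: "real \<Rightarrow> real \<Rightarrow> real \<Rightarrow> real \<Rightarrow> real \<Rightarrow> real \<Rightarrow> real" where
  "ThetaLX lam xi v1 v2 x t =
     (if v2 < 0 then exp (- xi * Mx v1 v2 x) / (1 + lam * Mx v1 v2 x) - exp (- xi * t) / (1 + lam * t)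
      else exp (- xi * (x / v1)) / (1 + lam * (x / v1))
           - exp (- xi * mxt v2 x t) / (1 + lam * mxt v2 x t))"

definition Ind :: "real \<Rightarrow> real \<Rightarrow> real \<Rightarrow> real \<Rightarrow> real" where
  "Ind v1 v2 x t = indicator {min (v2 * t) 0 <..< v1 * t} x"

text \<open>Absolutely continuous part of tilde p_j(x,t|v_j).\<close>
definition dens_same :: "real \<Rightarrow> real \<Rightarrow> real \<Rightarrow> real \<Rightarrow> nat \<Rightarrow> real \<Rightarrow> real \<Rightarrow> real" where
  "dens_same lam xi v1 v2 j t x =
     (let vj = vel v1 v2 j; vk = vel v1 v2 (3 - j); \<tau> = tau v1 v2 x t in
       indicator {v2 * t<..<v1 * t} x * exp (- xi * t) * lam^2 * \<tau> ^ (2 - j) * (t - \<tau>) ^ (j - 1)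
         / ((v1 - v2) * (1 + lam * t)^2)
     + sgn vj * indicator {0<..<t} (x / vj) * xi * exp (- xi * x / vj) / (vj + lam * x)
     + Ind v1 v2 x t *
        ((-1) ^ (3 - j) * xi * (vk + lam * x) / (v1 - v2)^2 * ThetaLX lam xi v1 v2 x t
         + (-1) ^ j * xi * exp (xi / lam) / (v1 - v2)^2 * (vk * (lam + xi) / lam + x * xi)
             * GammaLX lam xi v1 v2 x t))"

text \<open>Absolutely continuous part of tilde p_{3-j}(x,t|v_j) (no discrete part).\<close>
definition dens_other :: "real \<Rightarrow> real \<Rightarrow> real \<Rightarrow> real \<Rightarrow> nat \<Rightarrow> real \<Rightarrow> real \<Rightarrow> real" where
  "dens_other lam xi v1 v2 j t x =
     (let vj = vel v1 v2 j; vk = vel v1 v2 (3 - j); \<tau> = tau v1 v2 x t in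
       indicator {v2 * t<..<v1 * t} x * exp (- xi * t) * lam
         * (1 + lam * \<tau> ^ (j - 1) * (t - \<tau>) ^ (2 - j)) / ((v1 - v2) * (1 + lam * t)^2)
     + Ind v1 v2 x t *
        ((-1) ^ j * xi * (vk + lam * x) / (v1 - v2)^2 * ThetaLX lam xi v1 v2 x t
         + (-1) ^ (3 - j) * xi * exp (xi / lam) / (v1 - v2)^2
             * (vj * (lam + xi) / lam + x * xi + (-1) ^ j * xi * (v1 - v2) / lam)
             * GammaLX lam xi v1 v2 x t))"

end

theory Submission
  imports Defs
begin

text \<open>Under the change of
  variables \<open>x = v\<^sub>j s\<close> the atoms of \<open>p\<^sub>j(\<cdot>,s|v\<^sub>j)\<close> at \<open>v\<^sub>j s\<close> become a density on the
  segment between \<open>0\<close> and \<open>v\<^sub>j t\<close>. For the absolutely continuous parts, Fubini reduces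
  everything to a time integral for fixed \<open>x\<close>: the particle can be at \<open>x\<close> at time \<open>s\<close>
  exactly for \<open>s\<close> in a window \<open>(L,U)\<close>, on which \<open>c\<^sub>i\<^sub>,\<^sub>j\<close> is affine in \<open>s\<close>. Writing it as
  \<open>c + d(1+\<lambda>s)\<close>, the integrand \<open>e^{-\<xi>s}(c + d(1+\<lambda>s))/(1+\<lambda>s)^2\<close> is integrated by parts
  down to \<open>e^{-\<xi>s}/(1+\<lambda>s)\<close>, which the substitution \<open>w = \<xi>(s+1/\<lambda>)\<close> turns into the
  incomplete gamma function; the boundary terms make up \<open>\<Theta>\<close>.\<close>

section \<open>Elementary time integrals\<close>

lemma integral_exp_div_affine_eq_GammaInc:
  fixes lam xi L U :: real
  assumes lam: "lam > 0" and xi: "xi > 0" and L: "1 + lam * L > 0" "L \<le> U"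
  shows "(LBINT s=L..U. exp (- xi * s) / (1 + lam * s))
       = exp (xi / lam) / lam * GammaInc 0 ((L + 1 / lam) * xi) ((U + 1 / lam) * xi)"
proof -
  let ?w = "\<lambda>s. (s + 1 / lam) * xi"
  let ?f = "\<lambda>w::real. w powr (0 - 1) * exp (- w)"
  have pos: "1 + lam * s > 0" if "L \<le> s" for s
    using L that lam by (smt (verit) mult_left_mono)
  have w_pos: "?w s > 0" if "L \<le> s" for s
  proof -
    have "s + 1 / lam > 0" using pos[OF that] lam by (simp add: field_simps)
    then show ?thesis using xi by simp
  qed
  have "(LBINT s=L..U. xi *\<^sub>R ?f (?w s)) = (LBINT w=?w L..?w U. ?f w)"
  proof (rule interval_integral_substitution_finite[OF L(2)])
    show "(?w has_real_derivative xi) (at s within {L..U})" for s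
      by (auto intro!: derivative_eq_intros)
    show "continuous_on (?w ` {L..U}) ?f"
      by (rule continuous_on_subset[of "{0<..}"]) (auto intro!: continuous_intros w_pos)
  qed simp
  also have "(LBINT s=L..U. xi *\<^sub>R ?f (?w s))
      = (LBINT s=L..U. lam * exp (- xi / lam) * (exp (- xi * s) / (1 + lam * s)))"
  proof (rule interval_integral_cong)
    fix s assume "s \<in> einterval (min (ereal L) (ereal U)) (max (ereal L) (ereal U))"
    then have s: "L \<le> s" using L by (auto simp: min_def max_def)
    have "exp (- ?w s) = exp (- xi / lam) * exp (- xi * s)"
      by (simp add: exp_add[symmetric] algebra_simps)
    moreover have "?w s = xi * (1 + lam * s) / lam" using lam by (simp add: field_simps)
    ultimately show "xi *\<^sub>R ?f (?w s) = lam * exp (- xi / lam) * (exp (- xi * s) / (1 + lam * s))"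
      using w_pos[OF s] pos[OF s] lam xi by (simp add: powr_minus_divide)
  qed
  also have "\<dots> = lam * exp (- xi / lam) * (LBINT s=L..U. exp (- xi * s) / (1 + lam * s))"
    by (rule interval_lebesgue_integral_mult_right)
  finally have "lam * exp (- xi / lam) * (LBINT s=L..U. exp (- xi * s) / (1 + lam * s))
      = GammaInc 0 ((L + 1 / lam) * xi) ((U + 1 / lam) * xi)"
    by (simp only: GammaInc_def real_scaleR_def)
  then show ?thesis using lam by (simp add: field_simps exp_minus)
qed

lemma integral_exp_div_affine_square:
  fixes lam xi L U :: real
  assumes lam: "lam > 0" and L: "1 + lam * L > 0" "L \<le> U"
  shows "(LBINT s=L..U. exp (- xi * s) / (1 + lam * s)^2)
       = (exp (- xi * L) / (1 + lam * L) - exp (- xi * U) / (1 + lam * U)) / lam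
         - xi / lam * (LBINT s=L..U. exp (- xi * s) / (1 + lam * s))"
proof -
  define E where "E s = exp (- xi * s) / (1 + lam * s)" for s
  have nz: "1 + lam * s \<noteq> 0" if "L \<le> s" for s
    using L that lam by (smt (verit) mult_left_mono)
  have cont: "continuous_on {L..U} (\<lambda>s. exp (- xi * s) / (1 + lam * s)^2)" "continuous_on {L..U} E"
    unfolding E_def using nz by (auto intro!: continuous_intros)
  have "(LBINT s=L..U. exp (- xi * s) / (1 + lam * s)^2 + xi / lam * E s) = - (E U / lam) - - (E L / lam)"
  proof (rule interval_integral_FTC_finite)
    have "{min L U..max L U} = {L..U}" using L(2) by simp
    then show "continuous_on {min L U..max L U} (\<lambda>s. exp (- xi * s) / (1 + lam * s)^2 + xi / lam * E s)"
      by (simp only:) (intro continuous_on_add continuous_on_mult_left cont)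
    fix s assume "min L U \<le> s" "s \<le> max L U"
    then have s: "1 + lam * s \<noteq> 0" using L nz by (simp add: min_def)
    have "(E has_real_derivative - xi * E s - lam * exp (- xi * s) / (1 + lam * s)^2)
        (at s within {min L U..max L U})"
      unfolding E_def
      apply (rule derivative_eq_intros refl | simp add: s)+
      using s by (simp add: divide_simps) (simp add: algebra_simps power2_eq_square)
    from DERIV_minus[OF DERIV_cdivide[OF this, of lam]]
    have "((\<lambda>s. - (E s / lam)) has_real_derivative
        - ((- xi * E s - lam * exp (- xi * s) / (1 + lam * s)^2) / lam)) (at s within {min L U..max L U})" .
    also have "- ((- xi * E s - lam * exp (- xi * s) / (1 + lam * s)^2) / lam)
        = exp (- xi * s) / (1 + lam * s)^2 + xi / lam * E s"
      using lam by (simp add: field_simps)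
    finally show "((\<lambda>s. - (E s / lam)) has_vector_derivative exp (- xi * s) / (1 + lam * s)^2 + xi / lam * E s)
        (at s within {min L U..max L U})"
      by (simp add: has_real_derivative_iff_has_vector_derivative)
  qed
  moreover have "(LBINT s=L..U. exp (- xi * s) / (1 + lam * s)^2 + xi / lam * E s)
      = (LBINT s=L..U. exp (- xi * s) / (1 + lam * s)^2) + xi / lam * (LBINT s=L..U. E s)"
    using L cont
    by (simp add: interval_lebesgue_integral_add interval_integrable_continuous_on
        interval_lebesgue_integral_mult_right)
  ultimately have "(LBINT s=L..U. exp (- xi * s) / (1 + lam * s)^2)
      = (E L - E U) / lam - xi / lam * (LBINT s=L..U. E s)"
    by (simp add: diff_divide_distrib)
  then show ?thesis unfolding E_def .
qed

lemma integral_exp_affine_div_square: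
  fixes lam xi L U c d :: real
  assumes lam: "lam > 0" and xi: "xi > 0" and L: "1 + lam * L > 0" "L \<le> U"
  shows "(LBINT s=L..U. exp (- xi * s) * (c + d * (1 + lam * s)) / (1 + lam * s)^2)
       = c / lam * (exp (- xi * L) / (1 + lam * L) - exp (- xi * U) / (1 + lam * U))
         + (d - c * xi / lam) * exp (xi / lam) / lam * GammaInc 0 ((L + 1 / lam) * xi) ((U + 1 / lam) * xi)"
proof -
  have nz: "1 + lam * s \<noteq> 0" if "L \<le> s" for s
    using L that lam by (smt (verit) mult_left_mono)
  have "(LBINT s=L..U. exp (- xi * s) * (c + d * (1 + lam * s)) / (1 + lam * s)^2)
      = (LBINT s=L..U. c * (exp (- xi * s) / (1 + lam * s)^2) + d * (exp (- xi * s) / (1 + lam * s)))"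
  proof (intro interval_integral_cong)
    have "e * (c + d * u) / u^2 = c * (e / u^2) + d * (e / u)" if "u \<noteq> 0" for e u :: real
      using that by (simp add: field_simps power2_eq_square)
    then show "exp (- xi * s) * (c + d * (1 + lam * s)) / (1 + lam * s)^2
        = c * (exp (- xi * s) / (1 + lam * s)^2) + d * (exp (- xi * s) / (1 + lam * s))"
      if "s \<in> einterval (min (ereal L) (ereal U)) (max (ereal L) (ereal U))" for s
      using that L(2) nz[of s] by (simp add: min_def max_def)
  qed
  also have "\<dots> = c * (LBINT s=L..U. exp (- xi * s) / (1 + lam * s)^2)
      + d * (LBINT s=L..U. exp (- xi * s) / (1 + lam * s))"
  proof -
    have "interval_lebesgue_integrable lborel L U (\<lambda>s. exp (- xi * s) / (1 + lam * s)^2)"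
      "interval_lebesgue_integrable lborel L U (\<lambda>s. exp (- xi * s) / (1 + lam * s))"
      using L(2) nz by (auto intro!: interval_integrable_continuous_on continuous_intros)
    then show ?thesis
      by (simp only: interval_lebesgue_integral_add interval_lebesgue_integrable_mult_right
          interval_lebesgue_integral_mult_right)
  qed
  finally show ?thesis
    unfolding integral_exp_div_affine_square[OF lam L] integral_exp_div_affine_eq_GammaInc[OF lam xi L]
    using lam by (simp add: field_simps)
qed

section \<open>Splitting the reset sub-densities\<close>

definition subP_dens :: "real \<Rightarrow> real \<Rightarrow> real \<Rightarrow> nat \<Rightarrow> nat \<Rightarrow> real \<Rightarrow> real \<Rightarrow> real" where
  "subP_dens lam v1 v2 i j x s = lam * coef lam v1 v2 i j x s / ((v1 - v2) * (1 + lam * s)^2)"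

definition reset_kernel ::
    "real \<Rightarrow> real \<Rightarrow> real \<Rightarrow> real \<Rightarrow> nat \<Rightarrow> nat \<Rightarrow> real \<Rightarrow> real \<Rightarrow> real \<Rightarrow> real" where
  "reset_kernel lam xi v1 v2 i j t x s =
     indicator {0<..<t} s * exp (- xi * s) * indicator {v2 * s<..<v1 * s} x * subP_dens lam v1 v2 i j x s"

text \<open>The image of the time density \<open>e^{-\<xi>s}/(1+\<lambda>s)\<close> on \<open>(0,t)\<close> under \<open>s \<mapsto> v s\<close>:
  this is what the atom of \<open>p\<^sub>j(\<cdot>,s|v\<^sub>j)\<close> at \<open>v\<^sub>j s\<close> turns into after averaging over reset times.\<close>
definition atom_dens :: "real \<Rightarrow> real \<Rightarrow> real \<Rightarrow> real \<Rightarrow> real \<Rightarrow> real" where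
  "atom_dens lam xi v t x = sgn v * indicator {0<..<t} (x / v) * exp (- xi * x / v) / (v + lam * x)"

definition reset_dens :: "real \<Rightarrow> real \<Rightarrow> real \<Rightarrow> real \<Rightarrow> nat \<Rightarrow> nat \<Rightarrow> real \<Rightarrow> real \<Rightarrow> real" where
  "reset_dens lam xi v1 v2 i j t x =
     exp (- xi * t) * indicator {v2 * t<..<v1 * t} x * subP_dens lam v1 v2 i j x t
     + of_bool (i = j) * xi * atom_dens lam xi (vel v1 v2 j) t x
     + xi * (\<integral>s. reset_kernel lam xi v1 v2 i j t x s \<partial>lborel)"

lemma subP_dens_measurable[measurable (raw)]:
  assumes [measurable]: "f \<in> borel_measurable M" "g \<in> borel_measurable M"
  shows "(\<lambda>p. subP_dens lam v1 v2 i j (f p) (g p)) \<in> borel_measurable M"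
  unfolding subP_dens_def coef_def tau_def Let_def by measurable

lemma reset_kernel_measurable[measurable (raw)]:
  assumes [measurable]: "f \<in> borel_measurable M" "g \<in> borel_measurable M"
  shows "(\<lambda>p. reset_kernel lam xi v1 v2 i j t (f p) (g p)) \<in> borel_measurable M"
  unfolding reset_kernel_def indicator_def greaterThanLessThan_iff mem_Collect_eq by measurable

lemma subP_decomposition:
  "subP lam v1 v2 i j s A
     = (if i = j then indicator A (vel v1 v2 j * s) / (1 + lam * s) else 0)
       + (\<integral>x. indicator A x * indicator {v2 * s<..<v1 * s} x * subP_dens lam v1 v2 i j x s \<partial>lborel)"
  unfolding subP_def set_lebesgue_integral_def subP_dens_def
  by (simp add: indicator_inter_arith mult.assoc)

lemma coef_bounds:
  assumes "lam > 0" "v2 < v1" "v2 * s < x" "x < v1 * s"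
  shows "0 \<le> coef lam v1 v2 i j x s" "coef lam v1 v2 i j x s \<le> 1 + lam * s"
proof -
  have "0 < tau v1 v2 x s" "tau v1 v2 x s < s"
    using assms unfolding tau_def by (simp_all add: field_simps)
  with \<open>lam > 0\<close> have "0 \<le> lam * tau v1 v2 x s" "lam * tau v1 v2 x s \<le> lam * s"
    "0 \<le> lam * (s - tau v1 v2 x s)" "lam * (s - tau v1 v2 x s) \<le> lam * s"
    by (simp_all add: mult_left_mono)
  then show "0 \<le> coef lam v1 v2 i j x s" "coef lam v1 v2 i j x s \<le> 1 + lam * s"
    unfolding coef_def Let_def by auto
qed

lemma subP_dens_bounds:
  assumes "lam > 0" "v2 < v1" "s \<ge> 0" "v2 * s < x" "x < v1 * s"
  shows "0 \<le> subP_dens lam v1 v2 i j x s" "subP_dens lam v1 v2 i j x s \<le> lam / (v1 - v2)"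
proof -
  note c = coef_bounds[OF assms(1,2,4,5), of i j]
  have "1 + lam * s \<ge> 1" using assms by simp
  then have "(1 + lam * s) * 1 \<le> (1 + lam * s) * (1 + lam * s)"
    by (intro mult_left_mono) auto
  then have "coef lam v1 v2 i j x s \<le> (1 + lam * s)^2"
    using c(2) by (simp add: power2_eq_square)
  then have "coef lam v1 v2 i j x s / (1 + lam * s)^2 \<le> 1"
    using \<open>1 + lam * s \<ge> 1\<close> by simp
  then have "lam / (v1 - v2) * (coef lam v1 v2 i j x s / (1 + lam * s)^2) \<le> lam / (v1 - v2) * 1"
    using assms by (intro mult_left_mono) auto
  then show "subP_dens lam v1 v2 i j x s \<le> lam / (v1 - v2)"
    by (simp add: subP_dens_def)
  show "0 \<le> subP_dens lam v1 v2 i j x s"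
    using assms c by (simp add: subP_dens_def)
qed

lemma integrable_subP_dens:
  assumes "lam > 0" "v2 < v1" "s \<ge> 0"
  shows "integrable lborel (\<lambda>x. indicator {v2 * s<..<v1 * s} x * subP_dens lam v1 v2 i j x s)"
proof (rule Bochner_Integration.integrable_bound)
  show "integrable lborel (\<lambda>x. lam / (v1 - v2) * indicator {v2 * s..v1 * s} x)"
    by (intro integrable_mult_right integrable_real_indicator) (auto simp: emeasure_lborel_Icc_eq)
  have "\<bar>indicator {v2 * s<..<v1 * s} x * subP_dens lam v1 v2 i j x s\<bar>
      \<le> lam / (v1 - v2) * indicator {v2 * s..v1 * s} x" for x
    using subP_dens_bounds[OF assms, of x] assms by (auto simp: indicator_def)
  then show "AE x in lborel. norm (indicator {v2 * s<..<v1 * s} x * subP_dens lam v1 v2 i j x s)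
      \<le> norm (lam / (v1 - v2) * indicator {v2 * s..v1 * s} x)"
    using assms by (intro AE_I2) (simp add: abs_mult)
qed simp

lemma integrable_atom_kernel:
  fixes lam xi v t :: real
  assumes "lam \<ge> 0" "xi \<ge> 0" "A \<in> sets borel"
  shows "integrable lborel
    (\<lambda>s. indicator {0<..<t} s * exp (- xi * s) * indicator A (v * s) / (1 + lam * s))"
proof (rule Bochner_Integration.integrable_bound)
  show "integrable lborel (indicator {0..t} :: real \<Rightarrow> real)"
    by (intro integrable_real_indicator) (auto simp: emeasure_lborel_Icc_eq)
  show "(\<lambda>s. indicator {0<..<t} s * exp (- xi * s) * indicator A (v * s) / (1 + lam * s))
      \<in> borel_measurable lborel"
    using assms(3) by measurable
  have "norm (indicator {0<..<t} s * exp (- xi * s) * indicator A (v * s) / (1 + lam * s))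
      \<le> norm (indicator {0..t} s :: real)" for s
  proof (cases "0 < s \<and> s < t")
    case True
    then have "exp (- xi * s) \<le> 1" "1 \<le> 1 + lam * s" using assms by auto
    then have "exp (- xi * s) \<le> 1 + lam * s" "0 < 1 + lam * s" by linarith+
    then show ?thesis using True by (simp add: indicator_def)
  qed (auto simp: indicator_def)
  then show "AE s in lborel. norm (indicator {0<..<t} s * exp (- xi * s) * indicator A (v * s) / (1 + lam * s))
      \<le> norm (indicator {0..t} s :: real)"
    by simp
qed

lemma atom_kernel_rescaled:
  fixes lam xi v t x :: real
  assumes "lam \<ge> 0" "v \<noteq> 0"
  shows "\<bar>1 / v\<bar> * (indicator {0<..<t} (x / v) * exp (- xi * (x / v)) * indicator A (v * (x / v))
           / (1 + lam * (x / v)))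
       = indicator A x * atom_dens lam xi v t x"
proof (cases "0 < x / v \<and> x / v < t")
  case True
  then have "0 \<le> lam * (x / v)" using assms by (intro mult_nonneg_nonneg) auto
  then have "0 < 1 + lam * (x / v)" by linarith
  moreover have "v + lam * x = v * (1 + lam * (x / v))" using assms(2) by (simp add: field_simps)
  ultimately have "v + lam * x \<noteq> 0" "1 + lam * (x / v) \<noteq> 0" using assms(2) by auto
  then show ?thesis using True assms(2)
    by (cases "v > 0") (auto simp: atom_dens_def indicator_def divide_simps)
qed (auto simp: atom_dens_def indicator_def)

lemma integral_atom_kernel:
  fixes lam xi v t :: real
  assumes "lam \<ge> 0" "xi \<ge> 0" "v \<noteq> 0" "A \<in> sets borel"
  shows "integrable lborel (\<lambda>x. indicator A x * atom_dens lam xi v t x)"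
    "(\<integral>s. indicator {0<..<t} s * exp (- xi * s) * indicator A (v * s) / (1 + lam * s) \<partial>lborel)
      = (\<integral>x. indicator A x * atom_dens lam xi v t x \<partial>lborel)"
proof -
  let ?f = "\<lambda>s. indicator {0<..<t} s * exp (- xi * s) * indicator A (v * s) / (1 + lam * s)"
  have rescaled: "(\<lambda>x. \<bar>1 / v\<bar> * ?f (0 + 1 / v * x)) = (\<lambda>x. indicator A x * atom_dens lam xi v t x)"
    using atom_kernel_rescaled[OF assms(1,3)] by simp
  have "integrable lborel (\<lambda>x. ?f (0 + 1 / v * x))"
    using assms integrable_atom_kernel by (subst lborel_integrable_real_affine_iff) auto
  then show "integrable lborel (\<lambda>x. indicator A x * atom_dens lam xi v t x)"
    unfolding rescaled[symmetric] by (rule integrable_mult_right)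
  have "(\<integral>s. ?f s \<partial>lborel) = \<bar>1 / v\<bar> *\<^sub>R (\<integral>x. ?f (0 + 1 / v * x) \<partial>lborel)"
    using assms(3) by (intro lborel_integral_real_affine) simp
  also have "\<dots> = (\<integral>x. \<bar>1 / v\<bar> * ?f (0 + 1 / v * x) \<partial>lborel)"
    by (simp only: real_scaleR_def integral_mult_right_zero)
  finally show "(\<integral>s. ?f s \<partial>lborel) = (\<integral>x. indicator A x * atom_dens lam xi v t x \<partial>lborel)"
    by (simp only: rescaled)
qed

lemma reset_kernel_bound:
  assumes "lam > 0" "xi \<ge> 0" "v2 < v1"
  shows "\<bar>reset_kernel lam xi v1 v2 i j t x s\<bar>
    \<le> lam / (v1 - v2) * indicator ({- ((\<bar>v1\<bar> + \<bar>v2\<bar>) * t)..(\<bar>v1\<bar> + \<bar>v2\<bar>) * t} \<times> {0..t}) (x, s)"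
proof (cases "0 < s \<and> s < t \<and> v2 * s < x \<and> x < v1 * s")
  case True
  have "v1 * s \<le> \<bar>v1\<bar> * t" "- v2 * s \<le> \<bar>v2\<bar> * t" "0 \<le> \<bar>v1\<bar> * t" "0 \<le> \<bar>v2\<bar> * t"
    using True by (intro mult_mono mult_nonneg_nonneg; simp)+
  then have "\<bar>x\<bar> \<le> (\<bar>v1\<bar> + \<bar>v2\<bar>) * t"
    using True unfolding abs_le_iff distrib_right by linarith
  moreover have "exp (- xi * s) * subP_dens lam v1 v2 i j x s \<le> 1 * (lam / (v1 - v2))"
    using assms True subP_dens_bounds[OF assms(1,3), of s x i j] by (intro mult_mono) auto
  ultimately show ?thesis using True subP_dens_bounds[OF assms(1,3), of s x i j]
    by (auto simp: reset_kernel_def indicator_def abs_le_iff)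
next
  case False
  then show ?thesis using assms by (auto simp: reset_kernel_def indicator_def)
qed

lemma reset_kernel_Fubini:
  fixes lam xi v1 v2 t :: real
  assumes "lam > 0" "xi \<ge> 0" "v2 < v1" "t > 0" and A[measurable]: "A \<in> sets borel"
  shows "integrable lborel (\<lambda>x. indicator A x * (\<integral>s. reset_kernel lam xi v1 v2 i j t x s \<partial>lborel))"
    and "integrable lborel (\<lambda>s. \<integral>x. indicator A x * reset_kernel lam xi v1 v2 i j t x s \<partial>lborel)"
    and "(\<integral>s. (\<integral>x. indicator A x * reset_kernel lam xi v1 v2 i j t x s \<partial>lborel) \<partial>lborel)
       = (\<integral>x. indicator A x * (\<integral>s. reset_kernel lam xi v1 v2 i j t x s \<partial>lborel) \<partial>lborel)"
proof -
  define B where "B = {- ((\<bar>v1\<bar> + \<bar>v2\<bar>) * t)..(\<bar>v1\<bar> + \<bar>v2\<bar>) * t} \<times> {0..t}"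
  have "emeasure (lborel \<Otimes>\<^sub>M lborel) B
      = emeasure lborel {- ((\<bar>v1\<bar> + \<bar>v2\<bar>) * t)..(\<bar>v1\<bar> + \<bar>v2\<bar>) * t} * emeasure lborel {0..t}"
    unfolding B_def by (rule lborel.emeasure_pair_measure_Times) auto
  also have "\<dots> < \<infinity>"
    by (simp add: emeasure_lborel_Icc_eq ennreal_mult_less_top)
  finally have "integrable (lborel \<Otimes>\<^sub>M lborel) (\<lambda>p. lam / (v1 - v2) * indicator B p)"
    unfolding B_def by (intro integrable_mult_right integrable_real_indicator) auto
  then have int: "integrable (lborel \<Otimes>\<^sub>M lborel)
      (\<lambda>(x, s). indicator A x * reset_kernel lam xi v1 v2 i j t x s)"
  proof (rule Bochner_Integration.integrable_bound)
    show "AE p in lborel \<Otimes>\<^sub>M lborel. norm ((\<lambda>(x, s). indicator A x * reset_kernel lam xi v1 v2 i j t x s) p)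
        \<le> norm (lam / (v1 - v2) * indicator B p)"
    proof (intro AE_I2)
      fix p :: "real \<times> real"
      obtain x s where p: "p = (x, s)" by fastforce
      have "\<bar>indicator A x * reset_kernel lam xi v1 v2 i j t x s\<bar> \<le> \<bar>reset_kernel lam xi v1 v2 i j t x s\<bar>"
        by (simp add: indicator_def)
      also have "\<dots> \<le> lam / (v1 - v2) * indicator B (x, s)"
        unfolding B_def by (rule reset_kernel_bound[OF assms(1-3)])
      finally show "norm ((\<lambda>(x, s). indicator A x * reset_kernel lam xi v1 v2 i j t x s) p)
          \<le> norm (lam / (v1 - v2) * indicator B p)"
        using assms(1,3) by (simp add: p)
    qed
  qed measurable
  show "integrable lborel (\<lambda>x. indicator A x * (\<integral>s. reset_kernel lam xi v1 v2 i j t x s \<partial>lborel))"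
    using lborel_pair.integrable_fst'[OF int] by simp
  show "integrable lborel (\<lambda>s. \<integral>x. indicator A x * reset_kernel lam xi v1 v2 i j t x s \<partial>lborel)"
    using lborel_pair.integrable_snd[of "\<lambda>x s. indicator A x * reset_kernel lam xi v1 v2 i j t x s"] int
    by simp
  show "(\<integral>s. (\<integral>x. indicator A x * reset_kernel lam xi v1 v2 i j t x s \<partial>lborel) \<partial>lborel)
       = (\<integral>x. indicator A x * (\<integral>s. reset_kernel lam xi v1 v2 i j t x s \<partial>lborel) \<partial>lborel)"
    using lborel_pair.Fubini_integral[of "\<lambda>x s. indicator A x * reset_kernel lam xi v1 v2 i j t x s"] int
    by simp
qed

lemma time_integral_subP:
  fixes lam xi v1 v2 t :: real
  assumes lam: "lam > 0" and xi: "xi > 0" and v: "v2 < v1" and t: "t > 0"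
    and vj: "vel v1 v2 j \<noteq> 0" and A[measurable]: "A \<in> sets borel"
  shows "(LBINT s=0..t. exp (- xi * s) * subP lam v1 v2 i j s A)
    = of_bool (i = j) * (\<integral>x. indicator A x * atom_dens lam xi (vel v1 v2 j) t x \<partial>lborel)
      + (\<integral>x. indicator A x * (\<integral>s. reset_kernel lam xi v1 v2 i j t x s \<partial>lborel) \<partial>lborel)"
proof -
  let ?atom = "\<lambda>s. indicator {0<..<t} s * exp (- xi * s) * indicator A (vel v1 v2 j * s) / (1 + lam * s)"
  let ?K = "\<lambda>x s. indicator A x * reset_kernel lam xi v1 v2 i j t x s"
  note Fubini = reset_kernel_Fubini[OF lam less_imp_le[OF xi] v t A, of i j]
  have "indicator {0<..<t} s * (exp (- xi * s) * subP lam v1 v2 i j s A)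
      = of_bool (i = j) * ?atom s + (\<integral>x. ?K x s \<partial>lborel)" for s
  proof -
    have "(\<integral>x. ?K x s \<partial>lborel) = (\<integral>x. indicator {0<..<t} s * exp (- xi * s)
        * (indicator A x * indicator {v2 * s<..<v1 * s} x * subP_dens lam v1 v2 i j x s) \<partial>lborel)"
      by (simp add: reset_kernel_def ac_simps)
    also have "\<dots> = indicator {0<..<t} s * exp (- xi * s)
        * (\<integral>x. indicator A x * indicator {v2 * s<..<v1 * s} x * subP_dens lam v1 v2 i j x s \<partial>lborel)"
      by (rule integral_mult_right_zero)
    finally show ?thesis by (simp add: subP_decomposition algebra_simps)
  qed
  moreover have "einterval 0 (ereal t) = {0<..<t}"
    by (metis einterval_eq zero_ereal_def)
  ultimately have "(LBINT s=0..t. exp (- xi * s) * subP lam v1 v2 i j s A)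
      = (\<integral>s. of_bool (i = j) * ?atom s + (\<integral>x. ?K x s \<partial>lborel) \<partial>lborel)"
    using t by (simp add: interval_lebesgue_integral_def set_lebesgue_integral_def)
  also have "\<dots> = of_bool (i = j) * (\<integral>s. ?atom s \<partial>lborel) + (\<integral>s. (\<integral>x. ?K x s \<partial>lborel) \<partial>lborel)"
    using integrable_atom_kernel[OF less_imp_le[OF lam] less_imp_le[OF xi] A] Fubini(2) by simp
  finally show ?thesis
    using integral_atom_kernel(2)[OF less_imp_le[OF lam] less_imp_le[OF xi] vj A] Fubini(3) by simp
qed

lemma subP_reset_decomposition:
  fixes lam xi v1 v2 t :: real
  assumes lam: "lam > 0" and xi: "xi > 0" and v: "v2 < v1" and t: "t > 0"
    and vj: "vel v1 v2 j \<noteq> 0" and A[measurable]: "A \<in> sets borel"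
  shows "subP_reset lam xi v1 v2 i j t A
    = exp (- xi * t) * (if i = j then indicator A (vel v1 v2 j * t) / (1 + lam * t) else 0)
      + (LINT x:A|lborel. reset_dens lam xi v1 v2 i j t x)"
proof -
  let ?final = "\<lambda>x. indicator A x *
    (exp (- xi * t) * indicator {v2 * t<..<v1 * t} x * subP_dens lam v1 v2 i j x t)"
  let ?atom_dens = "\<lambda>x. indicator A x * atom_dens lam xi (vel v1 v2 j) t x"
  let ?R = "\<lambda>x. indicator A x * (\<integral>s. reset_kernel lam xi v1 v2 i j t x s \<partial>lborel)"
  have "(\<integral>x. ?final x \<partial>lborel) = exp (- xi * t)
      * (\<integral>x. indicator A x * indicator {v2 * t<..<v1 * t} x * subP_dens lam v1 v2 i j x t \<partial>lborel)"
    by (simp add: integral_mult_right_zero[symmetric] ac_simps)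
  then have no_reset_part: "exp (- xi * t) * subP lam v1 v2 i j t A
      = exp (- xi * t) * (if i = j then indicator A (vel v1 v2 j * t) / (1 + lam * t) else 0)
        + integral\<^sup>L lborel ?final"
    by (simp add: subP_decomposition distrib_left)
  have "integrable lborel (\<lambda>x. exp (- xi * t) * (indicator {v2 * t<..<v1 * t} x * subP_dens lam v1 v2 i j x t))"
    using integrable_subP_dens[OF lam v less_imp_le[OF t]] by (rule integrable_mult_right)
  from integrable_mult_indicator[OF _ this, of A] A
  have "integrable lborel ?final" by (simp add: ac_simps)
  moreover note integral_atom_kernel(1)[OF less_imp_le[OF lam] less_imp_le[OF xi] vj A]
    reset_kernel_Fubini(1)[OF lam less_imp_le[OF xi] v t A]
  moreover have "(LINT x:A|lborel. reset_dens lam xi v1 v2 i j t x)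
      = (\<integral>x. ?final x + (of_bool (i = j) * xi * ?atom_dens x + xi * ?R x) \<partial>lborel)"
    unfolding set_lebesgue_integral_def reset_dens_def by (simp add: algebra_simps)
  ultimately have "(LINT x:A|lborel. reset_dens lam xi v1 v2 i j t x) = integral\<^sup>L lborel ?final
      + (of_bool (i = j) * xi * integral\<^sup>L lborel ?atom_dens + xi * integral\<^sup>L lborel ?R)"
    by simp
  then show ?thesis
    unfolding subP_reset_def no_reset_part time_integral_subP[OF assms] by (simp add: algebra_simps)
qed

section \<open>The time integral at a fixed position\<close>

lemma time_window_neg:
  fixes v1 v2 t x :: real
  assumes "v2 < 0" "0 < v1" "0 < t" "v2 * t \<le> x" "x \<le> v1 * t"
  shows "0 \<le> Mx v1 v2 x" "Mx v1 v2 x \<le> t"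
    and "0 < s \<and> s < t \<and> v2 * s < x \<and> x < v1 * s \<longleftrightarrow> Mx v1 v2 x < s \<and> s < t"
    and "Ind v1 v2 x t = 1 \<or> Mx v1 v2 x = t"
proof -
  have upper: "x / v1 \<le> t" "x / v2 \<le> t"
    using assms by (simp_all add: pos_divide_le_eq neg_divide_le_eq mult.commute)
  show "0 \<le> Mx v1 v2 x"
    using assms by (cases "x \<ge> 0") (auto simp: Mx_def le_max_iff_disj divide_nonpos_neg)
  show "Mx v1 v2 x \<le> t" using upper by (simp add: Mx_def)
  have "x / v1 < s \<longleftrightarrow> x < v1 * s" "x / v2 < s \<longleftrightarrow> v2 * s < x"
    using assms by (simp_all add: pos_divide_less_eq neg_divide_less_eq mult.commute)
  moreover have "0 < s" if "v2 * s < x" "x < v1 * s"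
    using that assms by (smt (verit) mult_right_mono_neg)
  ultimately show "0 < s \<and> s < t \<and> v2 * s < x \<and> x < v1 * s \<longleftrightarrow> Mx v1 v2 x < s \<and> s < t"
    using \<open>0 \<le> Mx v1 v2 x\<close> by (auto simp: Mx_def)
  show "Ind v1 v2 x t = 1 \<or> Mx v1 v2 x = t"
  proof (cases "x = v2 * t \<or> x = v1 * t")
    case True
    then show ?thesis using assms upper by (auto simp: Mx_def)
  next
    case False
    then have "min (v2 * t) 0 < x \<and> x < v1 * t"
      using assms by (auto simp: mult_neg_pos min_def)
    then show ?thesis by (simp add: Ind_def)
  qed
qed

lemma time_window_pos:
  fixes v1 v2 t x :: real
  assumes "0 < v2" "v2 < v1" "0 < t" "v2 * t \<le> x" "x \<le> v1 * t"
  shows "0 \<le> x / v1" "x / v1 \<le> mxt v2 x t"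
    and "0 < s \<and> s < t \<and> v2 * s < x \<and> x < v1 * s \<longleftrightarrow> x / v1 < s \<and> s < mxt v2 x t"
    and "Ind v1 v2 x t = 1 \<or> x / v1 = mxt v2 x t"
proof -
  have "0 < x" using assms by (smt (verit) mult_pos_pos)
  then show "0 \<le> x / v1" using assms by simp
  have "x / v1 \<le> x / v2" using \<open>0 < x\<close> assms by (intro divide_left_mono) auto
  moreover have "x / v1 \<le> t" using assms by (simp add: pos_divide_le_eq mult.commute)
  ultimately show "x / v1 \<le> mxt v2 x t" by (simp add: mxt_def)
  have "x / v1 < s \<longleftrightarrow> x < v1 * s" "s < x / v2 \<longleftrightarrow> v2 * s < x"
    using assms by (simp_all add: pos_divide_less_eq pos_less_divide_eq mult.commute)
  then show "0 < s \<and> s < t \<and> v2 * s < x \<and> x < v1 * s \<longleftrightarrow> x / v1 < s \<and> s < mxt v2 x t"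
    using \<open>0 \<le> x / v1\<close> by (auto simp: mxt_def)
  show "Ind v1 v2 x t = 1 \<or> x / v1 = mxt v2 x t"
  proof (cases "x = v1 * t")
    case True
    then show ?thesis using \<open>x / v1 \<le> mxt v2 x t\<close> assms by (simp add: mxt_def)
  next
    case False
    then show ?thesis using \<open>0 < x\<close> assms by (simp add: Ind_def min_def)
  qed
qed

lemma time_window:
  fixes lam xi v1 v2 t x :: real
  assumes "v2 < v1" "v2 < 0 \<and> 0 < v1 \<or> 0 < v2" "0 < t" "v2 * t \<le> x" "x \<le> v1 * t"
  obtains L U where "0 \<le> L" "L \<le> U"
    and "\<And>s. 0 < s \<and> s < t \<and> v2 * s < x \<and> x < v1 * s \<longleftrightarrow> L < s \<and> s < U"
    and "Ind v1 v2 x t = 1 \<or> L = U"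
    and "ThetaLX lam xi v1 v2 x t = exp (- xi * L) / (1 + lam * L) - exp (- xi * U) / (1 + lam * U)"
    and "GammaLX lam xi v1 v2 x t = GammaInc 0 ((L + 1 / lam) * xi) ((U + 1 / lam) * xi)"
proof (cases "v2 < 0")
  case True
  with assms have "0 < v1" by auto
  from time_window_neg[OF True this assms(3-5)] that[of "Mx v1 v2 x" t] True show ?thesis
    by (simp add: ThetaLX_def GammaLX_def)
next
  case False
  with assms have "0 < v2" by auto
  from time_window_pos[OF this assms(1,3-5)] that[of "x / v1" "mxt v2 x t"] False show ?thesis
    by (simp add: ThetaLX_def GammaLX_def)
qed

lemma reset_kernel_time_integral:
  fixes lam xi v1 v2 t x c d :: real
  assumes lam: "lam > 0" and xi: "xi > 0" and v: "v2 < v1" and sign: "v2 < 0 \<and> 0 < v1 \<or> 0 < v2"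
    and t: "0 < t" and x: "v2 * t \<le> x" "x \<le> v1 * t"
    and coef: "\<And>s. coef lam v1 v2 i j x s = c + d * (1 + lam * s)"
  shows "xi * (\<integral>s. reset_kernel lam xi v1 v2 i j t x s \<partial>lborel)
    = Ind v1 v2 x t * (xi * c / (v1 - v2) * ThetaLX lam xi v1 v2 x t
        + xi * (lam * d - xi * c) * exp (xi / lam) / (lam * (v1 - v2)) * GammaLX lam xi v1 v2 x t)"
proof -
  obtain L U where L: "0 \<le> L" "L \<le> U"
    and window: "\<And>s. 0 < s \<and> s < t \<and> v2 * s < x \<and> x < v1 * s \<longleftrightarrow> L < s \<and> s < U"
    and Ind_or_empty: "Ind v1 v2 x t = 1 \<or> L = U"
    and Theta: "ThetaLX lam xi v1 v2 x t = exp (- xi * L) / (1 + lam * L) - exp (- xi * U) / (1 + lam * U)"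
    and Gamma: "GammaLX lam xi v1 v2 x t = GammaInc 0 ((L + 1 / lam) * xi) ((U + 1 / lam) * xi)"
    using time_window[OF v sign t x, of lam xi] by blast
  have pos: "1 + lam * L > 0" using lam L(1) by (simp add: add_pos_nonneg)
  have "reset_kernel lam xi v1 v2 i j t x s = indicator {L<..<U} s
      * (lam / (v1 - v2) * (exp (- xi * s) * (c + d * (1 + lam * s)) / (1 + lam * s)^2))" for s
    using window[of s] by (auto simp: reset_kernel_def subP_dens_def coef indicator_def)
  then have "(\<integral>s. reset_kernel lam xi v1 v2 i j t x s \<partial>lborel)
      = (LBINT s=L..U. lam / (v1 - v2) * (exp (- xi * s) * (c + d * (1 + lam * s)) / (1 + lam * s)^2))"
    using L(2) by (simp add: interval_lebesgue_integral_def set_lebesgue_integral_def)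
  also have "\<dots> = lam / (v1 - v2) * (LBINT s=L..U. exp (- xi * s) * (c + d * (1 + lam * s)) / (1 + lam * s)^2)"
    by (rule interval_lebesgue_integral_mult_right)
  also have "\<dots> = lam / (v1 - v2) * (c / lam * (exp (- xi * L) / (1 + lam * L) - exp (- xi * U) / (1 + lam * U))
      + (d - c * xi / lam) * exp (xi / lam) / lam * GammaInc 0 ((L + 1 / lam) * xi) ((U + 1 / lam) * xi))"
    by (simp only: integral_exp_affine_div_square[OF lam xi pos L(2)])
  finally have integral: "(\<integral>s. reset_kernel lam xi v1 v2 i j t x s \<partial>lborel) = \<dots>" .
  have "xi * (\<integral>s. reset_kernel lam xi v1 v2 i j t x s \<partial>lborel)
    = xi * (lam / (v1 - v2) * (c / lam * ThetaLX lam xi v1 v2 x t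
        + (d - c * xi / lam) * exp (xi / lam) / lam * GammaLX lam xi v1 v2 x t))"
    unfolding integral Theta Gamma ..
  also have "\<dots> = xi * c / (v1 - v2) * ThetaLX lam xi v1 v2 x t
        + xi * (lam * d - xi * c) * exp (xi / lam) / (lam * (v1 - v2)) * GammaLX lam xi v1 v2 x t"
    using lam v by (simp add: divide_simps) (simp add: algebra_simps)
  finally have "xi * (\<integral>s. reset_kernel lam xi v1 v2 i j t x s \<partial>lborel) = \<dots>" .
  moreover have "ThetaLX lam xi v1 v2 x t = 0 \<and> GammaLX lam xi v1 v2 x t = 0" if "L = U"
    unfolding Theta Gamma GammaInc_def that by simp
  ultimately show ?thesis using Ind_or_empty by auto
qed

lemma reset_dens_eq_dens_same:
  fixes lam xi v1 v2 t x :: real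
  assumes lam: "lam > 0" and xi: "xi > 0" and v: "v2 < v1" and sign: "v2 < 0 \<and> 0 < v1 \<or> 0 < v2"
    and t: "0 < t" and j: "j \<in> {1, 2}" and x: "v2 * t \<le> x" "x \<le> v1 * t"
  shows "reset_dens lam xi v1 v2 j j t x = dens_same lam xi v1 v2 j t x"
proof -
  note kernel = reset_kernel_time_integral[OF lam xi v sign t x]
  have ne: "v1 - v2 \<noteq> 0" "lam \<noteq> 0" using v lam by auto
  have "xi * (\<integral>s. reset_kernel lam xi v1 v2 j j t x s \<partial>lborel)
      = Ind v1 v2 x t * ((-1) ^ (3 - j) * xi * (vel v1 v2 (3 - j) + lam * x) / (v1 - v2)^2
            * ThetaLX lam xi v1 v2 x t
          + (-1) ^ j * xi * exp (xi / lam) / (v1 - v2)^2 * (vel v1 v2 (3 - j) * (lam + xi) / lam + x * xi)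
            * GammaLX lam xi v1 v2 x t)"
  proof (cases "j = 1")
    case True
    have "coef lam v1 v2 j j x s = (lam * x + v2) / (v1 - v2) + - v2 / (v1 - v2) * (1 + lam * s)" for s
      using True ne by (simp add: coef_def tau_def divide_simps) (simp add: algebra_simps)
    from kernel[OF this] show ?thesis
      using True ne by (simp add: vel_def divide_simps) (simp add: algebra_simps power2_eq_square)
  next
    case False
    with j have "j = 2" by simp
    have "coef lam v1 v2 j j x s = - (lam * x + v1) / (v1 - v2) + v1 / (v1 - v2) * (1 + lam * s)" for s
      using \<open>j = 2\<close> ne by (simp add: coef_def tau_def divide_simps) (simp add: algebra_simps)
    from kernel[OF this] show ?thesis
      using \<open>j = 2\<close> ne by (simp add: vel_def divide_simps) (simp add: algebra_simps power2_eq_square)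
  qed
  moreover have "exp (- xi * t) * indicator {v2 * t<..<v1 * t} x * subP_dens lam v1 v2 j j x t
      = indicator {v2 * t<..<v1 * t} x * exp (- xi * t) * lam^2 * tau v1 v2 x t ^ (2 - j)
          * (t - tau v1 v2 x t) ^ (j - 1) / ((v1 - v2) * (1 + lam * t)^2)"
    using j by (auto simp: subP_dens_def coef_def power2_eq_square mult_ac)
  ultimately show ?thesis
    unfolding reset_dens_def dens_same_def Let_def by (simp add: atom_dens_def mult_ac)
qed

lemma reset_dens_eq_dens_other:
  fixes lam xi v1 v2 t x :: real
  assumes lam: "lam > 0" and xi: "xi > 0" and v: "v2 < v1" and sign: "v2 < 0 \<and> 0 < v1 \<or> 0 < v2"
    and t: "0 < t" and j: "j \<in> {1, 2}" and x: "v2 * t \<le> x" "x \<le> v1 * t"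
  shows "reset_dens lam xi v1 v2 (3 - j) j t x = dens_other lam xi v1 v2 j t x"
proof -
  note kernel = reset_kernel_time_integral[OF lam xi v sign t x]
  have ne: "v1 - v2 \<noteq> 0" "lam \<noteq> 0" using v lam by auto
  have "xi * (\<integral>s. reset_kernel lam xi v1 v2 (3 - j) j t x s \<partial>lborel)
      = Ind v1 v2 x t * ((-1) ^ j * xi * (vel v1 v2 (3 - j) + lam * x) / (v1 - v2)^2
            * ThetaLX lam xi v1 v2 x t
          + (-1) ^ (3 - j) * xi * exp (xi / lam) / (v1 - v2)^2
            * (vel v1 v2 j * (lam + xi) / lam + x * xi + (-1) ^ j * xi * (v1 - v2) / lam)
            * GammaLX lam xi v1 v2 x t)"
  proof (cases "j = 1")
    case True
    have "coef lam v1 v2 (3 - j) j x s = - (lam * x + v2) / (v1 - v2) + v1 / (v1 - v2) * (1 + lam * s)" for s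
      using True ne by (simp add: coef_def tau_def divide_simps) (simp add: algebra_simps)
    from kernel[OF this] show ?thesis
      using True ne by (simp add: vel_def divide_simps) (simp add: algebra_simps power2_eq_square)
  next
    case False
    with j have "j = 2" by simp
    have "coef lam v1 v2 (3 - j) j x s = (lam * x + v1) / (v1 - v2) + - v2 / (v1 - v2) * (1 + lam * s)" for s
      using \<open>j = 2\<close> ne by (simp add: coef_def tau_def divide_simps) (simp add: algebra_simps)
    from kernel[OF this] show ?thesis
      using \<open>j = 2\<close> ne by (simp add: vel_def divide_simps) (simp add: algebra_simps power2_eq_square)
  qed
  moreover have "exp (- xi * t) * indicator {v2 * t<..<v1 * t} x * subP_dens lam v1 v2 (3 - j) j x t
      = indicator {v2 * t<..<v1 * t} x * exp (- xi * t) * lam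
          * (1 + lam * tau v1 v2 x t ^ (j - 1) * (t - tau v1 v2 x t) ^ (2 - j)) / ((v1 - v2) * (1 + lam * t)^2)"
    using j by (auto simp: subP_dens_def coef_def power2_eq_square mult_ac)
  moreover have "3 - j \<noteq> j" using j by auto
  ultimately show ?thesis
    unfolding reset_dens_def dens_other_def Let_def by simp
qed

theorem theorem1:
  fixes lam xi v1 v2 t :: real and j :: nat
  assumes "lam > 0" and "xi > 0" and "v2 < v1"
    and "v2 < 0 \<and> 0 < v1 \<or> 0 < v2"
    and "t > 0" and "j \<in> {1, 2}"
  shows "\<forall>A \<in> sets borel. A \<subseteq> {v2 * t .. v1 * t} \<longrightarrow>
           subP_reset lam xi v1 v2 j j t A
             = exp (- xi * t) * indicator A (vel v1 v2 j * t) / (1 + lam * t)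
               + (\<integral>x\<in>A. dens_same lam xi v1 v2 j t x \<partial>lborel)
         \<and> subP_reset lam xi v1 v2 (3 - j) j t A
             = (\<integral>x\<in>A. dens_other lam xi v1 v2 j t x \<partial>lborel)"
proof (intro ballI impI)
  fix A :: "real set"
  assume A: "A \<in> sets borel" and sub: "A \<subseteq> {v2 * t .. v1 * t}"
  have vj: "vel v1 v2 j \<noteq> 0" using assms by (auto simp: vel_def)
  note decomposition = subP_reset_decomposition[OF assms(1-3,5) vj A]
  have "(LINT x:A|lborel. reset_dens lam xi v1 v2 j j t x) = (LINT x:A|lborel. dens_same lam xi v1 v2 j t x)"
    using A sub assms by (intro set_lebesgue_integral_cong) (auto intro!: reset_dens_eq_dens_same)
  moreover have "(LINT x:A|lborel. reset_dens lam xi v1 v2 (3 - j) j t x)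
      = (LINT x:A|lborel. dens_other lam xi v1 v2 j t x)"
    using A sub assms by (intro set_lebesgue_integral_cong) (auto intro!: reset_dens_eq_dens_other)
  moreover have "3 - j \<noteq> j" using assms(6) by auto
  ultimately show "subP_reset lam xi v1 v2 j j t A
             = exp (- xi * t) * indicator A (vel v1 v2 j * t) / (1 + lam * t)
               + (\<integral>x\<in>A. dens_same lam xi v1 v2 j t x \<partial>lborel)
         \<and> subP_reset lam xi v1 v2 (3 - j) j t A
             = (\<integral>x\<in>A. dens_other lam xi v1 v2 j t x \<partial>lborel)"
    using decomposition[of j] decomposition[of "3 - j"] by simp
qed

end
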